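(* Let $g\ge1$, $A=\begin{pmatrix}0&0\\1&0\end{pmatrix}$, $\mathcal M_A=\{X(\lambda)=\lambda^{g+1}A+\sum_{i=0}^g\lambda^iX_i\mid X_i\in\mathfrak{sl}(2)\}$ with the compatible Poisson tensors $P_0,P_1$ of the context, and $P_\lambda=P_1-\lambda P_0$. Let $H(\lambda)=\tfrac12\mathrm{Tr}\,X(\lambda)^2=\sum_{i=0}^{2g+1}H_i\lambda^i$. Then $H(\lambda)$ is a Casimir of the Poisson pencil, i.e. $P_\lambda\,dH(\lambda)=0$ identically in $\lambda$; in particular $P_0dH_{i-1}=P_1dH_i$ for all $i\ge1$. Moreover, for each $i$ with $1\le i\le 2g+1$, the bi-Hamiltonian vector field $Y_{g-i}:=P_0\,dH_{i-1}=P_1\,dH_i$ has the Lax representation $$\frac{dX(\lambda)}{dt}=\big[(\lambda^{-i}X(\lambda))_+,X(\lambda)\big],$$ where $(\cdot)_+$ denotes the projection onto nonnegative powers of $\lambda$.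
   Context: Tangent and cotangent spaces of $\mathcal M_A\cong\mathfrak{sl}(2)^{g+1}$ are identified with $\mathfrak{sl}(2)^{g+1}$ via the pairing $\langle(V_i),(W_i)\rangle=\sum_{i=0}^g\mathrm{Tr}(V_iW_i)$, and $dF=(\partial F/\partial X_0,\dots,\partial F/\partial X_g)$. Put $X_{g+1}:=A$ and $X_m:=0$ for $m>g+1$. $P_0:(W_0,\dots,W_g)\mapsto(\dot X_i)$ with $\dot X_i=\sum_{j=0}^{g-i}[X_{i+j+1},W_j]$; $P_1:(W_0,\dots,W_g)\mapsto(\dot X_i)$ with $\dot X_0=-[X_0,W_0]$ and $\dot X_i=\sum_{j=1}^{g+1-i}[X_{i+j},W_j]$ for $1\le i\le g$. Note $\tfrac12\mathrm{Tr}A^2=0$, so $H(\lambda)$ has degree at most $2g+1$ in $\lambda$. *)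

theory Defs
  imports "HOL-Analysis.Analysis"
begin

type_synonym cmat = "complex^2^2"

definition sl2 :: "cmat \<Rightarrow> bool" where
  "sl2 M \<longleftrightarrow> trace M = 0"

definition Amat :: cmat where
  "Amat = (\<chi> i j. if i = 2 \<and> j = 1 then 1 else 0)"

definition smat :: "complex \<Rightarrow> cmat \<Rightarrow> cmat" where
  "smat c M = (\<chi> i j. c * M$i$j)"

definition brk :: "cmat \<Rightarrow> cmat \<Rightarrow> cmat" where
  "brk M N = M ** N - N ** M"

text \<open>A point of M_A is given by X 0, ..., X g in sl(2); only these entries matter.\<close>
definition in_MA :: "nat \<Rightarrow> (nat \<Rightarrow> cmat) \<Rightarrow> bool" where
  "in_MA g X \<longleftrightarrow> (\<forall>i\<le>g. sl2 (X i))"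

definition Xf :: "nat \<Rightarrow> (nat \<Rightarrow> cmat) \<Rightarrow> nat \<Rightarrow> cmat" where
  "Xf g X i = (if i \<le> g then X i else if i = g + 1 then Amat else 0)"

definition Xlam :: "nat \<Rightarrow> (nat \<Rightarrow> cmat) \<Rightarrow> complex \<Rightarrow> cmat" where
  "Xlam g X l = (\<Sum>i\<le>g+1. smat (l ^ i) (Xf g X i))"

definition Hlam :: "nat \<Rightarrow> (nat \<Rightarrow> cmat) \<Rightarrow> complex \<Rightarrow> complex" where
  "Hlam g X l = trace (Xlam g X l ** Xlam g X l) / 2"

text \<open>H_k = coefficient of l^k in (1/2) Tr X(l)^2.\<close>
definition Hcoef :: "nat \<Rightarrow> nat \<Rightarrow> (nat \<Rightarrow> cmat) \<Rightarrow> complex" where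
  "Hcoef g k X = (\<Sum>a\<le>k. trace (Xf g X a ** Xf g X (k - a))) / 2"

text \<open>Tangent/cotangent vectors: elements of sl(2)^(g+1), padded by zeros.\<close>
definition tangent :: "nat \<Rightarrow> (nat \<Rightarrow> cmat) \<Rightarrow> bool" where
  "tangent g V \<longleftrightarrow> (\<forall>i\<le>g. sl2 (V i)) \<and> (\<forall>i>g. V i = 0)"

definition pair :: "nat \<Rightarrow> (nat \<Rightarrow> cmat) \<Rightarrow> (nat \<Rightarrow> cmat) \<Rightarrow> complex" where
  "pair g V W = (\<Sum>i\<le>g. trace (V i ** W i))"

text \<open>W is the differential dF at X, identified with sl(2)^(g+1) via the trace pairing.\<close>
definition is_grad :: "nat \<Rightarrow> ((nat \<Rightarrow> cmat) \<Rightarrow> complex) \<Rightarrow> (nat \<Rightarrow> cmat) \<Rightarrow> (nat \<Rightarrow> cmat) \<Rightarrow> bool" where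
  "is_grad g F X W \<longleftrightarrow> tangent g W \<and>
     (\<forall>V. tangent g V \<longrightarrow>
        ((\<lambda>e. F (\<lambda>j. X j + smat e (V j))) has_field_derivative pair g W V) (at 0))"

definition grad :: "nat \<Rightarrow> ((nat \<Rightarrow> cmat) \<Rightarrow> complex) \<Rightarrow> (nat \<Rightarrow> cmat) \<Rightarrow> (nat \<Rightarrow> cmat)" where
  "grad g F X = (THE W. is_grad g F X W)"

definition P0 :: "nat \<Rightarrow> (nat \<Rightarrow> cmat) \<Rightarrow> (nat \<Rightarrow> cmat) \<Rightarrow> (nat \<Rightarrow> cmat)" where
  "P0 g X W = (\<lambda>i. if i \<le> g then (\<Sum>j\<le>g - i. brk (Xf g X (i + j + 1)) (W j)) else 0)"

definition P1 :: "nat \<Rightarrow> (nat \<Rightarrow> cmat) \<Rightarrow> (nat \<Rightarrow> cmat) \<Rightarrow> (nat \<Rightarrow> cmat)" where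
  "P1 g X W = (\<lambda>i. if i = 0 then - brk (X 0) (W 0)
                  else if i \<le> g then (\<Sum>j\<in>{1..g + 1 - i}. brk (Xf g X (i + j)) (W j))
                  else 0)"

text \<open>(l^(-i) X(l))_+ : the part with nonnegative powers of l.\<close>
definition plus_part :: "nat \<Rightarrow> nat \<Rightarrow> (nat \<Rightarrow> cmat) \<Rightarrow> complex \<Rightarrow> cmat" where
  "plus_part g i X l = (\<Sum>k\<in>{i..g+1}. smat (l ^ (k - i)) (Xf g X k))"

end

theory Submission
  imports Defs
begin

(* The differentials are explicit: dH(l) has components l^j X(l) and dH_k has components X_(k-j),
   for j = 0..g.  Away from the component 0, P1 acts on a covector W as P0 acts on the shifted
   covector j |-> W (j+1); since the components of dH(l) satisfy W (j+1) = l W j and those of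
   dH_k satisfy W (j+1) = W' j for W' = dH_(k-1), both the Casimir property and the recursion
   P0 dH_(i-1) = P1 dH_i reduce to the component 0, where they amount to [X(l) - X_0, X(l)] =
   -[X_0, X(l)] and to a sum of brackets [X_k, X_(i-k)].  For the Lax form, the coefficient of
   l^n in [(l^-i X(l))_+, X(l)] is the sum of [X_k, X_(n+i-k)] over i <= k <= n+i, whereas the
   n-th component of P0 dH_(i-1) is the same sum over n < k <= n+i; they agree because the full
   antidiagonal sum of the antisymmetric expression [X_k, X_(N-k)] vanishes. *)

lemma trace_zero [simp]: "trace (0::'a::semiring_1^'n^'n) = 0"
  by (simp add: trace_def)

lemma trace_sum:
  fixes f :: "'i \<Rightarrow> 'a::comm_semiring_1^'n^'n"
  shows "trace (sum f S) = (\<Sum>i\<in>S. trace (f i))"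
  by (induction S rule: infinite_finite_induct) (simp_all add: trace_add)

lemma matrix_add_rdistrib:
  fixes A B :: "'a::semiring_1^'n^'m"
  shows "(A + B) ** C = A ** C + B ** C"
  by (vector matrix_matrix_mult_def sum.distrib[symmetric] field_simps)

lemma matrix_diff_ldistrib:
  fixes A :: "'a::ring_1^'n^'m"
  shows "A ** (B - C) = A ** B - A ** C"
  by (vector matrix_matrix_mult_def sum_subtractf[symmetric] field_simps)

lemma matrix_diff_rdistrib:
  fixes A B :: "'a::ring_1^'n^'m"
  shows "(A - B) ** C = A ** C - B ** C"
  by (vector matrix_matrix_mult_def sum_subtractf[symmetric] field_simps)

lemma matrix_sum_mult:
  fixes f :: "'i \<Rightarrow> 'a::semiring_1^'n^'m"
  shows "sum f S ** B = (\<Sum>i\<in>S. f i ** B)"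
  by (induction S rule: infinite_finite_induct) (simp_all add: matrix_add_rdistrib)

lemma matrix_mult_sum:
  fixes A :: "'a::semiring_1^'n^'m"
  shows "A ** sum f S = (\<Sum>i\<in>S. A ** f i)"
  by (induction S rule: infinite_finite_induct) (simp_all add: matrix_add_ldistrib)

lemma sum_square_eq_sum_antidiagonals:
  fixes f :: "nat \<Rightarrow> nat \<Rightarrow> 'a::comm_monoid_add"
  assumes "\<And>a b. M < a \<or> M < b \<Longrightarrow> f a b = 0"
  shows "(\<Sum>a\<le>M. \<Sum>b\<le>M. f a b) = (\<Sum>n\<le>2*M. \<Sum>a\<le>n. f a (n - a))"
proof -
  let ?T = "{(a, b). a + b \<le> 2*M}"
  have "finite ?T"
    by (rule finite_subset[of _ "{..2*M} \<times> {..2*M}"]) auto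
  have "(\<Sum>a\<le>M. \<Sum>b\<le>M. f a b) = (\<Sum>(a, b)\<in>{..M} \<times> {..M}. f a b)"
    by (rule sum.cartesian_product)
  also have "\<dots> = (\<Sum>(a, b)\<in>?T. f a b)"
    using \<open>finite ?T\<close> by (intro sum.mono_neutral_left) (auto simp: not_le intro!: assms)
  also have "\<dots> = (\<Sum>n\<le>2*M. \<Sum>a\<le>n. f a (n - a))"
    by (rule sum.triangle_reindex_eq)
  finally show ?thesis .
qed

lemma sum_antidiagonal_antisym_eq_0:
  fixes f :: "nat \<Rightarrow> nat \<Rightarrow> 'a::real_vector"
  assumes antisym: "\<And>k p. f k p = - f p k"
  shows "(\<Sum>k\<le>N. f k (N - k)) = 0"
proof -
  have "(\<Sum>k\<le>N. f k (N - k)) = (\<Sum>k\<le>N. f (N - k) (N - (N - k)))"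
    by (rule sum.reindex_bij_witness[where i="\<lambda>k. N - k" and j="\<lambda>k. N - k"]) auto
  also have "\<dots> = - (\<Sum>k\<le>N. f k (N - k))"
    unfolding sum_negf[symmetric] by (intro sum.cong refl) (simp add: antisym[of "N - _"])
  finally have "(\<Sum>k\<le>N. f k (N - k)) + (\<Sum>k\<le>N. f k (N - k)) = 0"
    by (simp only: eq_neg_iff_add_eq_0)
  then show ?thesis
    by (simp flip: scaleR_2)
qed

lemma sum_antidiagonal_antisym_tail:
  fixes f :: "nat \<Rightarrow> nat \<Rightarrow> 'a::real_vector"
  assumes antisym: "\<And>k p. f k p = - f p k" and "a \<le> Suc N"
  shows "(\<Sum>k\<in>{a..N}. f k (N - k)) = (\<Sum>k\<in>{Suc N - a..N}. f k (N - k))"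
proof -
  have "(\<Sum>k<a. f k (N - k)) + (\<Sum>k\<in>{a..N}. f k (N - k)) = (\<Sum>k\<le>N. f k (N - k))"
  proof -
    have "{..N} = {..<a} \<union> {a..N}"
      using \<open>a \<le> Suc N\<close> by auto
    then show ?thesis
      by (simp add: sum.union_disjoint[symmetric] ivl_disj_int)
  qed
  also have "\<dots> = 0"
    by (rule sum_antidiagonal_antisym_eq_0) (rule antisym)
  finally have total: "(\<Sum>k<a. f k (N - k)) + (\<Sum>k\<in>{a..N}. f k (N - k)) = 0" .
  have "(\<Sum>k\<in>{Suc N - a..N}. f k (N - k)) = (\<Sum>k<a. f (N - k) (N - (N - k)))"
    using \<open>a \<le> Suc N\<close>
    by (intro sum.reindex_bij_witness[where i="\<lambda>k. N - k" and j="\<lambda>k. N - k"]) auto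
  also have "\<dots> = - (\<Sum>k<a. f k (N - k))"
    unfolding sum_negf[symmetric] using \<open>a \<le> Suc N\<close>
    by (intro sum.cong refl) (simp add: antisym[of "N - _"])
  finally show ?thesis
    using total by (metis neg_eq_iff_add_eq_0)
qed

lemma smat_add_right: "smat c (M + N) = smat c M + smat c N"
  by (simp add: smat_def vec_eq_iff algebra_simps)

lemma smat_diff_right: "smat c (M - N) = smat c M - smat c N"
  by (simp add: smat_def vec_eq_iff algebra_simps)

lemma smat_smat: "smat c (smat d M) = smat (c * d) M"
  by (simp add: smat_def vec_eq_iff)

lemma smat_zero_right [simp]: "smat c 0 = 0"
  by (simp add: smat_def vec_eq_iff)

lemma smat_one [simp]: "smat 1 M = M"
  by (simp add: smat_def vec_eq_iff)

lemma smat_sum_right: "smat c (sum f S) = (\<Sum>i\<in>S. smat c (f i))"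
  by (induction S rule: infinite_finite_induct) (simp_all add: smat_add_right)

lemma matrix_mult_smat_left: "smat c M ** N = smat c (M ** N)"
  by (simp add: smat_def vec_eq_iff matrix_matrix_mult_def sum_distrib_left algebra_simps)

lemma matrix_mult_smat_right: "M ** smat c N = smat c (M ** N)"
  by (simp add: smat_def vec_eq_iff matrix_matrix_mult_def sum_distrib_left algebra_simps)

lemma trace_smat: "trace (smat c M) = c * trace M"
  by (simp add: smat_def trace_def sum_distrib_left)

lemma brk_antisym: "brk M N = - brk N M"
  by (simp add: brk_def)

lemma brk_zero_left [simp]: "brk 0 M = 0"
  by (simp add: brk_def)

lemma brk_zero_right [simp]: "brk M 0 = 0"
  by (simp add: brk_def)

lemma brk_self [simp]: "brk M M = 0"
  by (simp add: brk_def)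

lemma brk_diff_left: "brk (M - N) P = brk M P - brk N P"
  by (simp add: brk_def matrix_diff_ldistrib matrix_diff_rdistrib)

lemma brk_smat_left: "brk (smat c M) N = smat c (brk M N)"
  by (simp add: brk_def matrix_mult_smat_left matrix_mult_smat_right smat_diff_right)

lemma brk_smat_right: "brk M (smat c N) = smat c (brk M N)"
  by (simp add: brk_def matrix_mult_smat_left matrix_mult_smat_right smat_diff_right)

lemma brk_sum_left: "brk (sum f S) N = (\<Sum>i\<in>S. brk (f i) N)"
  by (simp add: brk_def matrix_sum_mult matrix_mult_sum sum_subtractf)

lemma brk_sum_right: "brk M (sum f S) = (\<Sum>i\<in>S. brk M (f i))"
  by (simp add: brk_def matrix_sum_mult matrix_mult_sum sum_subtractf)

lemma trace_perturb_mult: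
  fixes P Q R S :: cmat
  shows "trace ((P + smat e Q) ** (R + smat e S)) =
     trace (P ** R) + e * (trace (P ** S) + trace (Q ** R)) + e\<^sup>2 * trace (Q ** S)"
  by (simp add: matrix_add_ldistrib matrix_add_rdistrib matrix_mult_smat_left
      matrix_mult_smat_right smat_smat trace_add trace_smat power2_eq_square algebra_simps)

lemma sl2_trace_form_nondegenerate:
  fixes D :: cmat
  assumes "trace D = 0" and "\<And>E. trace E = 0 \<Longrightarrow> trace (D ** E) = 0"
  shows "D = 0"
proof -
  define E12 :: cmat where "E12 = (\<chi> i j. if i = 1 \<and> j = 2 then 1 else 0)"
  define E21 :: cmat where "E21 = (\<chi> i j. if i = 2 \<and> j = 1 then 1 else 0)"
  define H :: cmat where "H = (\<chi> i j. if i = j then if i = 1 then 1 else -1 else 0)"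
  have "trace (D ** E12) = 0" "trace (D ** E21) = 0" "trace (D ** H) = 0"
    by (intro assms(2); simp add: E12_def E21_def H_def trace_def sum_2)+
  then have "D$2$1 = 0" "D$1$2 = 0" "D$1$1 = D$2$2"
    by (simp_all add: E12_def E21_def H_def trace_def sum_2 matrix_matrix_mult_def)
  moreover have "D$1$1 + D$2$2 = 0"
    using assms(1) by (simp add: trace_def sum_2)
  ultimately show ?thesis
    by (auto simp: vec_eq_iff forall_2)
qed

lemma Xf_0 [simp]: "Xf g X 0 = X 0"
  by (simp add: Xf_def)

lemma Xf_eq_0: "g + 1 < i \<Longrightarrow> Xf g X i = 0"
  by (simp add: Xf_def)

lemma trace_Xf: "in_MA g X \<Longrightarrow> trace (Xf g X i) = 0"
  by (auto simp: Xf_def in_MA_def sl2_def Amat_def trace_def sum_2)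

lemma trace_Xlam: "in_MA g X \<Longrightarrow> trace (Xlam g X l) = 0"
  by (simp add: Xlam_def trace_sum trace_smat trace_Xf del: sum.atMost_Suc)

lemma Xf_perturb:
  "tangent g V \<Longrightarrow> Xf g (\<lambda>j. X j + smat e (V j)) i = Xf g X i + smat e (V i)"
  by (simp add: Xf_def tangent_def)

lemma pair_single:
  assumes "i \<le> g"
  shows "pair g W (\<lambda>j. if j = i then E else 0) = trace (W i ** E)"
proof -
  have "pair g W (\<lambda>j. if j = i then E else 0) = (\<Sum>j\<le>g. if j = i then trace (W i ** E) else 0)"
    unfolding pair_def by (intro sum.cong) simp_all
  then show ?thesis
    using assms by simp
qed

lemma is_grad_unique:
  assumes "is_grad g F X W" and "is_grad g F X W'"
  shows "W = W'"
proof
  fix i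
  show "W i = W' i"
  proof (cases "i \<le> g")
    case False
    then show ?thesis
      using assms by (simp add: is_grad_def tangent_def)
  next
    case True
    have "W i - W' i = 0"
    proof (rule sl2_trace_form_nondegenerate)
      show "trace (W i - W' i) = 0"
        using assms True by (simp add: is_grad_def tangent_def sl2_def trace_sub)
    next
      fix E :: cmat
      assume "trace E = 0"
      let ?V = "\<lambda>j. if j = i then E else 0"
      have "tangent g ?V"
        using \<open>trace E = 0\<close> True by (simp add: tangent_def sl2_def)
      then have "pair g W ?V = pair g W' ?V"
        using assms unfolding is_grad_def by (blast intro: DERIV_unique)
      then show "trace ((W i - W' i) ** E) = 0"
        using True by (simp add: pair_single matrix_diff_rdistrib trace_sub)
    qed
    then show ?thesis
      by simp
  qed
qed

lemma grad_eqI: "is_grad g F X W \<Longrightarrow> grad g F X = W"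
  unfolding grad_def using is_grad_unique by blast

lemma is_grad_quadraticI:
  assumes "tangent g W"
    and "\<And>V. tangent g V \<Longrightarrow>
      \<exists>c0 c2. \<forall>e. F (\<lambda>j. X j + smat e (V j)) = c0 + e * pair g W V + e\<^sup>2 * c2"
  shows "is_grad g F X W"
  unfolding is_grad_def
proof (intro conjI allI impI)
  fix V
  assume "tangent g V"
  then obtain c0 c2 where F: "\<And>e. F (\<lambda>j. X j + smat e (V j)) = c0 + e * pair g W V + e\<^sup>2 * c2"
    using assms(2) by blast
  have "((\<lambda>e. c0 + e * pair g W V + e\<^sup>2 * c2) has_field_derivative pair g W V) (at 0)"
    by (auto intro!: derivative_eq_intros)
  then show "((\<lambda>e. F (\<lambda>j. X j + smat e (V j))) has_field_derivative pair g W V) (at 0)"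
    by (simp add: F)
qed (rule assms(1))

definition dHlam :: "nat \<Rightarrow> (nat \<Rightarrow> cmat) \<Rightarrow> complex \<Rightarrow> nat \<Rightarrow> cmat" where
  "dHlam g X l = (\<lambda>j. if j \<le> g then smat (l ^ j) (Xlam g X l) else 0)"

definition dHcoef :: "nat \<Rightarrow> (nat \<Rightarrow> cmat) \<Rightarrow> nat \<Rightarrow> nat \<Rightarrow> cmat" where
  "dHcoef g X k = (\<lambda>j. if j \<le> g \<and> j \<le> k then Xf g X (k - j) else 0)"

lemma grad_Hlam:
  assumes "in_MA g X"
  shows "grad g (\<lambda>Y. Hlam g Y l) X = dHlam g X l"
proof (intro grad_eqI is_grad_quadraticI)
  show "tangent g (dHlam g X l)"
    using trace_Xlam[OF assms] by (simp add: tangent_def sl2_def dHlam_def trace_smat)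
next
  fix V
  assume V: "tangent g V"
  define XL where "XL = Xlam g X l"
  define VL where "VL = (\<Sum>a\<le>g+1. smat (l ^ a) (V a))"
  have "V (Suc g) = 0"
    using V by (simp add: tangent_def)
  have "trace (XL ** VL) = (\<Sum>a\<le>g+1. l ^ a * trace (XL ** V a))"
    by (simp add: VL_def matrix_mult_sum trace_sum matrix_mult_smat_right trace_smat
        del: sum.atMost_Suc)
  also have "\<dots> = pair g (dHlam g X l) V"
    unfolding pair_def dHlam_def XL_def using \<open>V (Suc g) = 0\<close>
    by (simp add: matrix_mult_smat_left trace_smat)
  finally have linear: "pair g (dHlam g X l) V = (trace (XL ** VL) + trace (VL ** XL)) / 2"
    by (simp add: trace_mul_sym[of VL])
  have "Xlam g (\<lambda>j. X j + smat e (V j)) l = XL + smat e VL" for e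
    unfolding Xlam_def XL_def VL_def Xf_perturb[OF V]
    by (simp add: smat_add_right sum.distrib smat_sum_right smat_smat mult.commute)
  then have "Hlam g (\<lambda>j. X j + smat e (V j)) l =
      trace (XL ** XL) / 2 + e * pair g (dHlam g X l) V + e\<^sup>2 * (trace (VL ** VL) / 2)" for e
    by (simp add: Hlam_def trace_perturb_mult linear field_simps)
  then show "\<exists>c0 c2. \<forall>e. Hlam g (\<lambda>j. X j + smat e (V j)) l = c0 + e * pair g (dHlam g X l) V + e\<^sup>2 * c2"
    by blast
qed

lemma grad_Hcoef:
  assumes "in_MA g X"
  shows "grad g (Hcoef g k) X = dHcoef g X k"
proof (intro grad_eqI is_grad_quadraticI)
  show "tangent g (dHcoef g X k)"
    using trace_Xf[OF assms] by (simp add: tangent_def sl2_def dHcoef_def)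
next
  fix V
  assume V: "tangent g V"
  have V_eq_0: "V a = 0" if "g < a" for a
    using V that by (simp add: tangent_def)
  have reverse: "(\<Sum>a\<le>k. trace (Xf g X a ** V (k - a))) = (\<Sum>a\<le>k. trace (Xf g X (k - a) ** V a))"
    by (rule sum.reindex_bij_witness[where i="\<lambda>a. k - a" and j="\<lambda>a. k - a"]) auto
  have "(\<Sum>a\<le>k. trace (Xf g X (k - a) ** V a)) = (\<Sum>a\<in>{..k} \<inter> {..g}. trace (Xf g X (k - a) ** V a))"
    by (intro sum.mono_neutral_right) (auto simp: V_eq_0 not_le[symmetric])
  also have "\<dots> = (\<Sum>a\<le>g. if a \<in> {..k} then trace (Xf g X (k - a) ** V a) else 0)"
    by (subst Int_commute) (rule sum.inter_restrict, simp)
  also have "\<dots> = pair g (dHcoef g X k) V"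
    unfolding pair_def dHcoef_def by (intro sum.cong) auto
  finally have linear: "(\<Sum>a\<le>k. trace (Xf g X a ** V (k - a)) + trace (V a ** Xf g X (k - a)))
      = 2 * pair g (dHcoef g X k) V"
    using reverse by (simp add: sum.distrib trace_mul_sym[of "V _"])
  have expand: "Hcoef g k (\<lambda>j. X j + smat e (V j)) =
      ((\<Sum>a\<le>k. trace (Xf g X a ** Xf g X (k - a)))
       + e * (\<Sum>a\<le>k. trace (Xf g X a ** V (k - a)) + trace (V a ** Xf g X (k - a)))
       + e\<^sup>2 * (\<Sum>a\<le>k. trace (V a ** V (k - a)))) / 2" for e
    unfolding Hcoef_def Xf_perturb[OF V] trace_perturb_mult by (simp add: sum.distrib flip: sum_distrib_left)
  have "Hcoef g k (\<lambda>j. X j + smat e (V j)) =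
      Hcoef g k X + e * pair g (dHcoef g X k) V + e\<^sup>2 * ((\<Sum>a\<le>k. trace (V a ** V (k - a))) / 2)" for e
    unfolding expand linear by (simp add: Hcoef_def field_simps)
  then show "\<exists>c0 c2. \<forall>e. Hcoef g k (\<lambda>j. X j + smat e (V j)) = c0 + e * pair g (dHcoef g X k) V + e\<^sup>2 * c2"
    by blast
qed

lemma P0_smat: "P0 g X (\<lambda>j. smat c (W j)) m = smat c (P0 g X W m)"
  by (simp add: P0_def brk_smat_right smat_sum_right)

lemma P0_cong:
  assumes "\<And>j. m + j \<le> g \<Longrightarrow> W j = W' j"
  shows "P0 g X W m = P0 g X W' m"
  unfolding P0_def using assms by (auto intro!: sum.cong)

lemma P1_eq_P0_shift:
  assumes "1 \<le> m"
  shows "P1 g X W m = P0 g X (\<lambda>j. W (Suc j)) m"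
proof (cases "m \<le> g")
  case True
  have "P1 g X W m = (\<Sum>j\<in>{Suc 0..Suc (g - m)}. brk (Xf g X (m + j)) (W j))"
    using assms True by (simp add: P1_def Suc_diff_le)
  also have "\<dots> = (\<Sum>j\<in>{0..g - m}. brk (Xf g X (m + Suc j)) (W (Suc j)))"
    by (rule sum.shift_bounds_cl_Suc_ivl)
  also have "\<dots> = P0 g X (\<lambda>j. W (Suc j)) m"
    using True by (simp add: P0_def atLeast0AtMost)
  finally show ?thesis .
next
  case False
  then show ?thesis
    by (simp add: P0_def P1_def)
qed

lemma P1_dHlam_eq_smat_P0: "P1 g X (dHlam g X l) m = smat l (P0 g X (dHlam g X l) m)"
proof (cases "m = 0")
  case True
  let ?XL = "Xlam g X l"
  have XL_split: "?XL = X 0 + (\<Sum>j\<le>g. smat (l ^ Suc j) (Xf g X (Suc j)))"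
    unfolding Xlam_def by (simp add: sum.atMost_Suc_shift del: sum.atMost_Suc)
  have "smat l (P0 g X (dHlam g X l) 0) = (\<Sum>j\<le>g. brk (smat (l ^ Suc j) (Xf g X (Suc j))) ?XL)"
    by (simp add: P0_def dHlam_def smat_sum_right brk_smat_left brk_smat_right smat_smat)
  also have "\<dots> = brk (?XL - X 0) ?XL"
    unfolding brk_sum_left[symmetric] using XL_split by (simp add: algebra_simps)
  also have "\<dots> = P1 g X (dHlam g X l) 0"
    by (simp add: P1_def dHlam_def brk_diff_left)
  finally show ?thesis
    using True by simp
next
  case False
  then have "P1 g X (dHlam g X l) m = P0 g X (\<lambda>j. dHlam g X l (Suc j)) m"
    by (simp add: P1_eq_P0_shift)
  also have "\<dots> = P0 g X (\<lambda>j. smat l (dHlam g X l j)) m"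
    using False by (intro P0_cong) (simp add: dHlam_def smat_smat)
  finally show ?thesis
    by (simp add: P0_smat)
qed

lemma P0_dHcoef:
  assumes "1 \<le> i" and "n \<le> g"
  shows "P0 g X (dHcoef g X (i - 1)) n = (\<Sum>k\<in>{Suc n..n + i}. brk (Xf g X k) (Xf g X (n + i - k)))"
proof -
  let ?h = "\<lambda>j. brk (Xf g X (n + j + 1)) (Xf g X (i - 1 - j))"
  have "P0 g X (dHcoef g X (i - 1)) n = (\<Sum>j\<le>g - n. if j \<in> {..<i} then ?h j else 0)"
    unfolding P0_def dHcoef_def using assms by (auto intro!: sum.cong)
  also have "\<dots> = (\<Sum>j\<in>{..g - n} \<inter> {..<i}. ?h j)"
    by (rule sum.inter_restrict[symmetric]) simp
  also have "\<dots> = (\<Sum>j<i. ?h j)"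
    by (intro sum.mono_neutral_left) (auto simp: Xf_def)
  also have "\<dots> = (\<Sum>k\<in>{Suc n..n + i}. brk (Xf g X k) (Xf g X (n + i - k)))"
    using assms
    by (intro sum.reindex_bij_witness[where i="\<lambda>k. k - Suc n" and j="\<lambda>j. j + Suc n"])
      (auto simp: add.commute)
  finally show ?thesis .
qed

lemma P0_dHcoef_eq_P1_dHcoef:
  assumes "1 \<le> i"
  shows "P0 g X (dHcoef g X (i - 1)) = P1 g X (dHcoef g X i)"
proof
  fix m
  show "P0 g X (dHcoef g X (i - 1)) m = P1 g X (dHcoef g X i) m"
  proof (cases "m = 0")
    case True
    have "P0 g X (dHcoef g X (i - 1)) 0 = (\<Sum>k\<in>{1..i}. brk (Xf g X k) (Xf g X (i - k)))"
      using P0_dHcoef[OF assms, of 0] by simp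
    also have "\<dots> = (\<Sum>k\<in>{i..i}. brk (Xf g X k) (Xf g X (i - k)))"
      using sum_antidiagonal_antisym_tail[of "\<lambda>k p. brk (Xf g X k) (Xf g X p)" 1 i, OF brk_antisym]
      by simp
    also have "\<dots> = P1 g X (dHcoef g X i) 0"
      by (simp add: P1_def dHcoef_def brk_antisym[of "X 0"])
    finally show ?thesis
      using True by simp
  next
    case False
    then have "P1 g X (dHcoef g X i) m = P0 g X (\<lambda>j. dHcoef g X i (Suc j)) m"
      by (simp add: P1_eq_P0_shift)
    also have "\<dots> = P0 g X (dHcoef g X (i - 1)) m"
      using False assms by (intro P0_cong) (auto simp: dHcoef_def)
    finally show ?thesis ..
  qed
qed

lemma plus_part_eq: "plus_part g i X l = (\<Sum>q\<le>g+1. smat (l ^ q) (Xf g X (q + i)))"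
proof -
  have "plus_part g i X l = (\<Sum>k\<in>{i..g+1+i}. smat (l ^ (k - i)) (Xf g X k))"
    unfolding plus_part_def by (rule sum.mono_neutral_left) (auto simp: Xf_eq_0)
  also have "\<dots> = (\<Sum>q\<le>g+1. smat (l ^ q) (Xf g X (q + i)))"
    by (rule sum.reindex_bij_witness[where i="\<lambda>q. q + i" and j="\<lambda>k. k - i"]) auto
  finally show ?thesis .
qed

lemma Lax_P0_dHcoef:
  assumes "1 \<le> i"
  shows "(\<Sum>n\<le>g. smat (l ^ n) (P0 g X (dHcoef g X (i - 1)) n)) = brk (plus_part g i X l) (Xlam g X l)"
proof -
  define B where "B k p = brk (Xf g X k) (Xf g X p)" for k p
  have B_antisym: "B k p = - B p k" for k p
    unfolding B_def by (rule brk_antisym)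
  have B_eq_0: "B k p = 0" if "g + 1 < k \<or> g + 1 < p" for k p
    using that by (auto simp: B_def Xf_eq_0)
  have "brk (plus_part g i X l) (Xlam g X l) = (\<Sum>q\<le>g+1. \<Sum>p\<le>g+1. smat (l ^ (q + p)) (B (q + i) p))"
    unfolding plus_part_eq Xlam_def B_def brk_sum_left unfolding brk_sum_right
    by (simp add: brk_smat_left brk_smat_right smat_smat power_add mult.commute del: sum.atMost_Suc)
  also have "\<dots> = (\<Sum>n\<le>2*(g+1). \<Sum>q\<le>n. smat (l ^ (q + (n - q))) (B (q + i) (n - q)))"
    by (rule sum_square_eq_sum_antidiagonals) (auto simp: B_eq_0)
  also have "\<dots> = (\<Sum>n\<le>2*(g+1). smat (l ^ n) (\<Sum>k\<in>{i..n + i}. B k (n + i - k)))"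
  proof (intro sum.cong refl)
    fix n
    have "(\<Sum>q\<le>n. B (q + i) (n - q)) = (\<Sum>k\<in>{i..n + i}. B k (n + i - k))"
      by (rule sum.reindex_bij_witness[where i="\<lambda>k. k - i" and j="\<lambda>q. q + i"]) auto
    then show "(\<Sum>q\<le>n. smat (l ^ (q + (n - q))) (B (q + i) (n - q))) = smat (l ^ n) (\<Sum>k\<in>{i..n + i}. B k (n + i - k))"
      by (simp flip: smat_sum_right)
  qed
  also have "\<dots> = (\<Sum>n\<le>2*(g+1). smat (l ^ n) (\<Sum>k\<in>{Suc n..n + i}. B k (n + i - k)))"
    using sum_antidiagonal_antisym_tail[of B i, OF B_antisym] by simp
  also have "\<dots> = (\<Sum>n\<le>g. smat (l ^ n) (\<Sum>k\<in>{Suc n..n + i}. B k (n + i - k)))"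
    by (intro sum.mono_neutral_right) (auto simp: B_eq_0)
  also have "\<dots> = (\<Sum>n\<le>g. smat (l ^ n) (P0 g X (dHcoef g X (i - 1)) n))"
    using P0_dHcoef[OF assms] by (intro sum.cong refl) (simp add: B_def)
  finally show ?thesis ..
qed

lemma Hcoef_top_eq_0: "Hcoef g (2*g + 2) X = 0"
proof -
  have "trace (Xf g X a ** Xf g X (2*g + 2 - a)) = (if a = g + 1 then trace (Amat ** Amat) else 0)" for a
    by (auto simp: Xf_def)
  moreover have "trace (Amat ** Amat) = 0"
    by (simp add: Amat_def trace_def matrix_matrix_mult_def sum_2)
  ultimately show ?thesis
    by (simp add: Hcoef_def)
qed

lemma Hlam_eq_sum_Hcoef: "Hlam g X l = (\<Sum>i\<le>2*g+1. Hcoef g i X * l ^ i)"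
proof -
  define T where "T a b = trace (Xf g X a ** Xf g X b)" for a b
  have "trace (Xlam g X l ** Xlam g X l) = (\<Sum>a\<le>g+1. \<Sum>b\<le>g+1. l ^ (a + b) * T a b)"
    unfolding Xlam_def T_def matrix_sum_mult unfolding matrix_mult_sum
    by (simp add: trace_sum matrix_mult_smat_left matrix_mult_smat_right smat_smat trace_smat
        power_add mult.commute del: sum.atMost_Suc)
  also have "\<dots> = (\<Sum>n\<le>2*(g+1). \<Sum>a\<le>n. l ^ (a + (n - a)) * T a (n - a))"
    by (rule sum_square_eq_sum_antidiagonals) (auto simp: T_def Xf_eq_0)
  also have "\<dots> = (\<Sum>n\<le>2*(g+1). l ^ n * (\<Sum>a\<le>n. T a (n - a)))"
    by (intro sum.cong refl) (simp add: sum_distrib_left)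
  also have "\<dots> = 2 * (\<Sum>n\<le>2*g+1. Hcoef g n X * l ^ n)"
  proof -
    have "(\<Sum>a\<le>n. T a (n - a)) = 2 * Hcoef g n X" for n
      by (simp add: Hcoef_def T_def)
    then show ?thesis
      using Hcoef_top_eq_0[of g X] by (simp add: sum_distrib_left mult_ac)
  qed
  finally show ?thesis
    by (simp add: Hlam_def)
qed

theorem mainTheorem5:
  fixes g :: nat and X :: "nat \<Rightarrow> cmat"
  assumes "g \<ge> 1" and "in_MA g X"
  shows "(\<forall>l. Hlam g X l = (\<Sum>i\<le>2*g+1. Hcoef g i X * l ^ i))
    \<and> (\<forall>l. \<forall>i. P1 g X (grad g (\<lambda>Y. Hlam g Y l) X) i
                 - smat l (P0 g X (grad g (\<lambda>Y. Hlam g Y l) X) i) = 0)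
    \<and> (\<forall>i\<ge>1. P0 g X (grad g (Hcoef g (i - 1)) X) = P1 g X (grad g (Hcoef g i) X))
    \<and> (\<forall>i. 1 \<le> i \<and> i \<le> 2*g+1 \<longrightarrow>
         (\<forall>l. (\<Sum>k\<le>g. smat (l ^ k) (P0 g X (grad g (Hcoef g (i - 1)) X) k))
              = brk (plus_part g i X l) (Xlam g X l)))"
proof (intro conjI allI impI)
  fix l
  show "Hlam g X l = (\<Sum>i\<le>2*g+1. Hcoef g i X * l ^ i)"
    by (rule Hlam_eq_sum_Hcoef)
next
  fix l i
  show "P1 g X (grad g (\<lambda>Y. Hlam g Y l) X) i - smat l (P0 g X (grad g (\<lambda>Y. Hlam g Y l) X) i) = 0"
    by (simp add: grad_Hlam[OF assms(2)] P1_dHlam_eq_smat_P0)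
next
  fix i :: nat
  assume "1 \<le> i"
  then show "P0 g X (grad g (Hcoef g (i - 1)) X) = P1 g X (grad g (Hcoef g i) X)"
    unfolding grad_Hcoef[OF assms(2)] by (rule P0_dHcoef_eq_P1_dHcoef)
next
  fix i :: nat and l :: complex
  assume "1 \<le> i \<and> i \<le> 2*g+1"
  then show "(\<Sum>k\<le>g. smat (l ^ k) (P0 g X (grad g (Hcoef g (i - 1)) X) k))
      = brk (plus_part g i X l) (Xlam g X l)"
    unfolding grad_Hcoef[OF assms(2)] by (intro Lax_P0_dHcoef) simp
qed

end
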